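(* For every sufficiently small fixed $\varepsilon>0$ and $p=n^{-(2/5+\varepsilon)}$, asymptotically almost surely $G\sim\mathbb{G}(n,p)$ does not contain two edge-disjoint $K_4$-tiled subgraphs $H_1,H_2$ with $\phi(H_1)\ge3$, $\phi(H_2)\ge 3$ and $|V(H_1)\cap V(H_2)|\ge 2$, where $\phi(H)=8-5v(H)+2e(H)$.
   Context: A graph is $K_4$-tiled if every edge lies in a copy of $K_4$ and the auxiliary graph whose vertices are the copies of $K_4$ (two adjacent iff they share an edge) is connected. *)

theory Defs
  imports Complex_Main
begin

text \<open>Graphs on vertex set {0..<n} (type nat); an edge is a 2-element set of vertices.
  A subgraph H is represented by its edge set F; its vertex set is the union of its edges.\<close>

definition all_edges :: "nat \<Rightarrow> nat set set" where
  "all_edges n = {e. \<exists>u v. u < n \<and> v < n \<and> u \<noteq> v \<and> e = {u, v}}"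

definition gnp_prob :: "nat \<Rightarrow> real \<Rightarrow> (nat set set \<Rightarrow> bool) \<Rightarrow> real" where
  "gnp_prob n p P = (\<Sum>E\<in>Pow (all_edges n).
      if P E then p ^ card E * (1 - p) ^ (card (all_edges n) - card E) else 0)"

definition gverts :: "nat set set \<Rightarrow> nat set" where
  "gverts F = \<Union>F"

definition k4_copies :: "nat set set \<Rightarrow> nat set set" where
  "k4_copies F = {S. finite S \<and> card S = 4 \<and> (\<forall>u\<in>S. \<forall>v\<in>S. u \<noteq> v \<longrightarrow> {u, v} \<in> F)}"

definition k4_adj :: "nat set set \<Rightarrow> nat set \<Rightarrow> nat set \<Rightarrow> bool" where
  "k4_adj F S T \<longleftrightarrow> S \<in> k4_copies F \<and> T \<in> k4_copies F \<and> S \<noteq> T \<and> card (S \<inter> T) \<ge> 2"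

definition k4_tiled :: "nat set set \<Rightarrow> bool" where
  "k4_tiled F \<longleftrightarrow> (\<forall>e\<in>F. \<exists>S\<in>k4_copies F. e \<subseteq> S)
     \<and> (\<forall>S\<in>k4_copies F. \<forall>T\<in>k4_copies F. (k4_adj F)\<^sup>*\<^sup>* S T)"

definition phi :: "nat set set \<Rightarrow> int" where
  "phi F = 8 - 5 * int (card (gverts F)) + 2 * int (card F)"

definition bad_pair :: "nat set set \<Rightarrow> bool" where
  "bad_pair E \<longleftrightarrow> (\<exists>F1 F2. F1 \<subseteq> E \<and> F2 \<subseteq> E \<and> F1 \<inter> F2 = {}
      \<and> k4_tiled F1 \<and> k4_tiled F2 \<and> phi F1 \<ge> 3 \<and> phi F2 \<ge> 3
      \<and> card (gverts F1 \<inter> gverts F2) \<ge> 2)"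

end

theory Submission
  imports Defs
begin

text \<open>If \<open>G\<close> contains such a pair, it contains a subgraph \<open>J\<close> of bounded size that is too dense
  to appear in \<open>G(n,p)\<close>. If one of the tiled graphs has at least \<open>M\<close> edges, gluing its copies
  of \<open>K\<^sub>4\<close> one at a time along shared edges never lowers \<open>\<phi>\<close>, which gives \<open>J\<close> with
  \<open>M \<le> e(J) \<le> M + 5\<close> and \<open>\<phi>(J) \<ge> 0\<close>; otherwise \<open>J = H\<^sub>1 \<union> H\<^sub>2\<close> has
  \<open>\<phi>(J) \<ge> 3 + 3 + 5 \<cdot> 2 - 8 = 8\<close>. Either way \<open>v(J) - (2/5 + \<epsilon>) e(J) \<le> -\<epsilon>\<close> once \<open>\<epsilon> M \<ge> 3\<close>,
  and since \<open>e(J)\<close> is bounded, summing \<open>p\<^bsup>e(J)\<^esup>\<close> over the at most \<open>n\<^bsup>v\<^esup> 2\<^bsup>2\<^sup>v\<^esup>\<close> candidates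
  with \<open>v\<close> vertices bounds the probability by \<open>O(n\<^bsup>-\<epsilon>\<^esup>)\<close>.\<close>

definition clique_edges :: "'a set set \<Rightarrow> 'a set set" where
  "clique_edges X = (\<Union>S\<in>X. {e. e \<subseteq> S \<and> card e = 2})"

lemma clique_edges_insert:
  "clique_edges (insert S X) = {e. e \<subseteq> S \<and> card e = 2} \<union> clique_edges X"
  unfolding clique_edges_def by simp

lemma card_clique_edges_singleton: "finite S \<Longrightarrow> card (clique_edges {S}) = card S choose 2"
  unfolding clique_edges_def by (simp add: n_subsets)

lemma clique_edges_subset_Pow: "clique_edges X \<subseteq> Pow (\<Union>X)"
  unfolding clique_edges_def by auto

lemma finite_clique_edges: "finite (\<Union>X) \<Longrightarrow> finite (clique_edges X)"
  using clique_edges_subset_Pow by (rule finite_subset) simp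

lemma Union_clique_edges:
  assumes "\<And>S. S \<in> X \<Longrightarrow> 2 \<le> card S"
  shows "\<Union>(clique_edges X) = \<Union>X"
proof
  show "\<Union>(clique_edges X) \<subseteq> \<Union>X"
    using clique_edges_subset_Pow by blast
  show "\<Union>X \<subseteq> \<Union>(clique_edges X)"
  proof
    fix u assume "u \<in> \<Union>X"
    then obtain S where S: "S \<in> X" "u \<in> S" by blast
    have "\<not> S \<subseteq> {u}"
      using card_mono[of "{u}" S] assms[OF S(1)] by auto
    then obtain v where "v \<in> S" "v \<noteq> u" by blast
    then have "{u, v} \<in> clique_edges X"
      unfolding clique_edges_def using S by auto
    then show "u \<in> \<Union>(clique_edges X)" by blast
  qed
qed

lemma card_clique_edges_insert_ge:
  assumes fin: "finite (\<Union>X)" "finite T"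
  shows "card (clique_edges X) + (card T choose 2) \<le>
           card (clique_edges (insert T X)) + (card (T \<inter> \<Union>X) choose 2)"
proof -
  let ?A = "clique_edges X" and ?B = "{e. e \<subseteq> T \<and> card e = 2}"
  have finA: "finite ?A" using fin(1) by (rule finite_clique_edges)
  have finB: "finite ?B" using fin(2) by simp
  have "?A \<inter> ?B \<subseteq> {e. e \<subseteq> T \<inter> \<Union>X \<and> card e = 2}"
    unfolding clique_edges_def by blast
  moreover have "finite {e. e \<subseteq> T \<inter> \<Union>X \<and> card e = 2}" using fin(2) by simp
  ultimately have "card (?A \<inter> ?B) \<le> card {e. e \<subseteq> T \<inter> \<Union>X \<and> card e = 2}"
    using card_mono by blast
  also have "\<dots> = card (T \<inter> \<Union>X) choose 2"
    using fin(2) by (intro n_subsets) simp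
  finally have "card (?A \<inter> ?B) \<le> card (T \<inter> \<Union>X) choose 2" .
  moreover have "card ?A + card ?B = card (?A \<union> ?B) + card (?A \<inter> ?B)"
    using card_Un_Int[OF finA finB] .
  moreover have "card ?B = card T choose 2"
    using fin(2) by (rule n_subsets)
  ultimately show ?thesis
    unfolding clique_edges_insert by (simp add: Un_commute)
qed

text \<open>Gluing a \<open>K\<^sub>4\<close> along at least two vertices adds \<open>4 - m\<close> vertices and at least
  \<open>6 - (m choose 2)\<close> edges, where \<open>m\<close> is the size of the overlap; since \<open>(m - 2)(m - 4) \<le> 0\<close>,
  this never decreases \<open>8 - 5v + 2e\<close>.\<close>
lemma density_insert_K4:
  assumes fin: "finite (\<Union>X)" "finite T" and T: "card T = 4" "2 \<le> card (T \<inter> \<Union>X)"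
    and dense: "5 * card (\<Union>X) \<le> 8 + 2 * card (clique_edges X)"
  shows "5 * card (\<Union>(insert T X)) \<le> 8 + 2 * card (clique_edges (insert T X))"
proof -
  define m where "m = card (T \<inter> \<Union>X)"
  have "m \<le> card T" unfolding m_def using fin(2) by (simp add: card_mono)
  then have m: "m = 2 \<or> m = 3 \<or> m = 4" using T unfolding m_def by linarith
  have verts: "card (\<Union>(insert T X)) + m = card (\<Union>X) + 4"
    using card_Un_Int[OF fin(2,1)] T unfolding m_def by simp
  have "card T choose 2 = 6"
    using T by (simp add: choose_two)
  then have edges: "card (clique_edges X) + 6 \<le> card (clique_edges (insert T X)) + (m choose 2)"
    using card_clique_edges_insert_ge[OF fin] unfolding m_def by simp
  have "2 * (m choose 2) + 8 \<le> 5 * m"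
    using m by (elim disjE) (simp_all add: choose_two)
  then show ?thesis
    using verts edges dense by linarith
qed

lemma rtranclp_exits_set:
  "r\<^sup>*\<^sup>* x y \<Longrightarrow> x \<in> A \<Longrightarrow> y \<notin> A \<Longrightarrow> \<exists>a b. r a b \<and> a \<in> A \<and> b \<notin> A"
  by (induction rule: rtranclp.induct) auto

lemma k4_copies_clique_edges_subset:
  assumes "X \<subseteq> k4_copies F"
  shows "clique_edges X \<subseteq> F"
proof
  fix e assume "e \<in> clique_edges X"
  then obtain S where S: "S \<in> X" "e \<subseteq> S" "card e = 2"
    unfolding clique_edges_def by blast
  then obtain u v where "e = {u, v}" "u \<noteq> v"
    by (meson card_2_iff)
  then show "e \<in> F"
    using S assms unfolding k4_copies_def by blast
qed

lemma k4_copy_card: "S \<in> k4_copies F \<Longrightarrow> card S = 4"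
  unfolding k4_copies_def by blast

lemma k4_copy_subset_gverts:
  assumes "S \<in> k4_copies F"
  shows "S \<subseteq> gverts F"
proof -
  have "S = \<Union>(clique_edges {S})"
    using Union_clique_edges[of "{S}"] k4_copy_card[OF assms] by simp
  also have "\<dots> \<subseteq> gverts F"
    using k4_copies_clique_edges_subset[of "{S}" F] assms unfolding gverts_def by blast
  finally show ?thesis .
qed

lemma finite_k4_copies: "finite (gverts F) \<Longrightarrow> finite (k4_copies F)"
  by (rule finite_subset[where B = "Pow (gverts F)"]) (auto dest: k4_copy_subset_gverts)

lemma k4_tiled_subset_clique_edges:
  assumes "k4_tiled F" "\<And>e. e \<in> F \<Longrightarrow> card e = 2"
  shows "F \<subseteq> clique_edges (k4_copies F)"
  using assms unfolding k4_tiled_def clique_edges_def by blast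

lemma phi_clique_edges_nonneg:
  assumes "X \<subseteq> k4_copies F" "5 * card (\<Union>X) \<le> 8 + 2 * card (clique_edges X)"
  shows "0 \<le> phi (clique_edges X)"
proof -
  have "gverts (clique_edges X) = \<Union>X"
    unfolding gverts_def using assms(1) k4_copy_card by (intro Union_clique_edges) fastforce
  then show ?thesis
    using assms(2) unfolding phi_def by simp
qed

lemma k4_tiled_grow_dense:
  assumes F: "finite (gverts F)" "k4_tiled F" "\<And>e. e \<in> F \<Longrightarrow> card e = 2"
    and X: "X \<subseteq> k4_copies F" "X \<noteq> {}" "5 * card (\<Union>X) \<le> 8 + 2 * card (clique_edges X)"
    and M: "card (clique_edges X) < M" "M \<le> card F"
  shows "\<exists>J\<subseteq>F. M \<le> card J \<and> card J \<le> M + 5 \<and> 0 \<le> phi J"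
  using X M
proof (induction "card (k4_copies F) - card X" arbitrary: X rule: less_induct)
  case less
  let ?C = "k4_copies F"
  have finC: "finite ?C" using finite_k4_copies[OF F(1)] .
  have finX: "finite X" using finite_subset[OF less.prems(1) finC] .
  have "\<Union>X \<subseteq> gverts F" using less.prems(1) k4_copy_subset_gverts by blast
  then have finU: "finite (\<Union>X)" using F(1) by (rule finite_subset)
  have "X \<noteq> ?C"
  proof
    assume "X = ?C"
    then have "F \<subseteq> clique_edges X" using k4_tiled_subset_clique_edges F(2,3) by simp
    then have "card F \<le> card (clique_edges X)" using card_mono finite_clique_edges[OF finU] by blast
    then show False using less.prems(4,5) by simp
  qed
  then obtain T0 where T0: "T0 \<in> ?C" "T0 \<notin> X" using less.prems(1) by blast
  obtain S0 where S0: "S0 \<in> X" using less.prems(2) by blast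
  have "(k4_adj F)\<^sup>*\<^sup>* S0 T0" using F(2) S0 T0 less.prems(1) unfolding k4_tiled_def by blast
  then obtain S T where ST: "k4_adj F S T" "S \<in> X" "T \<notin> X"
    using rtranclp_exits_set[OF _ S0 T0(2)] by blast
  then have T: "T \<in> ?C" "2 \<le> card (S \<inter> T)" unfolding k4_adj_def by auto
  have finT: "finite T" using T(1) unfolding k4_copies_def by blast
  let ?Y = "insert T X"
  have YC: "?Y \<subseteq> ?C" using T(1) less.prems(1) by blast
  have "card (S \<inter> T) \<le> card (T \<inter> \<Union>X)" using ST(2) finT by (intro card_mono) auto
  then have dense: "5 * card (\<Union>?Y) \<le> 8 + 2 * card (clique_edges ?Y)"
    using density_insert_K4[OF finU finT k4_copy_card[OF T(1)]] T(2) less.prems(3) by linarith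
  have "card (clique_edges ?Y) \<le> card {e. e \<subseteq> T \<and> card e = 2} + card (clique_edges X)"
    unfolding clique_edges_insert by (rule card_Un_le)
  also have "card {e. e \<subseteq> T \<and> card e = 2} = 6"
    using n_subsets[OF finT] k4_copy_card[OF T(1)] by (simp add: choose_two)
  finally have small: "card (clique_edges ?Y) \<le> card (clique_edges X) + 6" by simp
  show ?case
  proof (cases "M \<le> card (clique_edges ?Y)")
    case True
    then show ?thesis
      using small less.prems(4) phi_clique_edges_nonneg[OF YC dense]
        k4_copies_clique_edges_subset[OF YC] by (intro exI[of _ "clique_edges ?Y"]) auto
  next
    case False
    have "card ?Y \<le> card ?C" using card_mono[OF finC YC] .
    then have "card ?C - card ?Y < card ?C - card X" using finX ST(3) by simp
    then show ?thesis
      using less.hyps YC dense False less.prems(5) by simp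
  qed
qed

lemma k4_tiled_dense_subgraph:
  assumes F: "finite (gverts F)" "k4_tiled F" "\<And>e. e \<in> F \<Longrightarrow> card e = 2"
    and M: "7 \<le> M" "M \<le> card F"
  shows "\<exists>J\<subseteq>F. M \<le> card J \<and> card J \<le> M + 5 \<and> 0 \<le> phi J"
proof -
  obtain e where "e \<in> F" using M by fastforce
  then obtain S where S: "S \<in> k4_copies F" using F(2) unfolding k4_tiled_def by blast
  have "finite S" using S unfolding k4_copies_def by blast
  then have "card (clique_edges {S}) = 6"
    using card_clique_edges_singleton[OF \<open>finite S\<close>] k4_copy_card[OF S] by (simp add: choose_two)
  then show ?thesis
    using k4_tiled_grow_dense[OF F, of "{S}"] S M k4_copy_card[OF S] by simp
qed

lemma phi_Un_disjoint:
  assumes fin: "finite F1" "finite F2" "finite (gverts F1)" "finite (gverts F2)"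
    and disj: "F1 \<inter> F2 = {}"
  shows "phi (F1 \<union> F2) = phi F1 + phi F2 + 5 * int (card (gverts F1 \<inter> gverts F2)) - 8"
proof -
  have "gverts (F1 \<union> F2) = gverts F1 \<union> gverts F2" unfolding gverts_def by blast
  then have "card (gverts (F1 \<union> F2)) + card (gverts F1 \<inter> gverts F2) = card (gverts F1) + card (gverts F2)"
    using card_Un_Int[OF fin(3,4)] by simp
  then have "int (card (gverts (F1 \<union> F2))) + int (card (gverts F1 \<inter> gverts F2))
      = int (card (gverts F1)) + int (card (gverts F2))"
    by (simp flip: of_nat_add)
  moreover have "int (card (F1 \<union> F2)) = int (card F1) + int (card F2)"
    using card_Un_disjoint[OF fin(1,2) disj] by simp
  ultimately show ?thesis
    unfolding phi_def by linarith
qed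

lemma card_all_edges_member: "e \<in> all_edges n \<Longrightarrow> card e = 2"
  unfolding all_edges_def by auto

lemma all_edges_subset_Pow: "all_edges n \<subseteq> Pow {..<n}"
  unfolding all_edges_def by auto

lemma finite_all_edges: "finite (all_edges n)"
  using all_edges_subset_Pow by (rule finite_subset) simp

lemma gverts_subset_lessThan: "F \<subseteq> all_edges n \<Longrightarrow> gverts F \<subseteq> {..<n}"
  using all_edges_subset_Pow unfolding gverts_def by blast

lemma bad_pair_dense_subgraph:
  assumes E: "E \<subseteq> all_edges n" "bad_pair E" and M: "7 \<le> M"
  shows "\<exists>J\<subseteq>E. 0 < card J \<and> card J \<le> 2 * M + 5 \<and> ((M \<le> card J \<and> 0 \<le> phi J) \<or> 8 \<le> phi J)"
proof -
  obtain F1 F2 where F: "F1 \<subseteq> E" "F2 \<subseteq> E" "F1 \<inter> F2 = {}" "k4_tiled F1" "k4_tiled F2"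
     "phi F1 \<ge> 3" "phi F2 \<ge> 3" "card (gverts F1 \<inter> gverts F2) \<ge> 2"
    using E(2) unfolding bad_pair_def by blast
  have fin_gverts: "finite (gverts F)" if "F \<subseteq> E" for F
    using gverts_subset_lessThan[OF subset_trans[OF that E(1)]] by (rule finite_subset) simp
  have fin: "finite F" if "F \<subseteq> E" for F
    using fin_gverts[OF that] unfolding gverts_def by (rule finite_UnionD)
  have edge: "card e = 2" if "e \<in> E" for e
    using card_all_edges_member E(1) that by blast
  show ?thesis
  proof (cases "M \<le> card F1 \<or> M \<le> card F2")
    case True
    then obtain F where F: "F \<subseteq> E" "k4_tiled F" "M \<le> card F" using F by blast
    then obtain J where "J \<subseteq> F" "M \<le> card J" "card J \<le> M + 5" "0 \<le> phi J"
      using k4_tiled_dense_subgraph[OF fin_gverts[OF F(1)] F(2) _ M] edge F(1) by blast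
    then show ?thesis
      using F(1) M by (intro exI[of _ J]) auto
  next
    case False
    have "phi (F1 \<union> F2) = phi F1 + phi F2 + 5 * int (card (gverts F1 \<inter> gverts F2)) - 8"
      using fin[OF F(1)] fin[OF F(2)] fin_gverts[OF F(1)] fin_gverts[OF F(2)] F(3)
      by (rule phi_Un_disjoint)
    moreover have "2 \<le> int (card (gverts F1 \<inter> gverts F2))" using F(8) by simp
    ultimately have "8 \<le> phi (F1 \<union> F2)" using F(6,7) by linarith
    moreover have "F1 \<noteq> {}"
    proof
      assume "F1 = {}"
      then show False using F(8) by (simp add: gverts_def)
    qed
    then have "0 < card (F1 \<union> F2)"
      using fin[OF F(1)] fin[OF F(2)] by (simp add: card_gt_0_iff)
    moreover have "card F1 < M" "card F2 < M" using False by auto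
    then have "card (F1 \<union> F2) \<le> 2 * M + 5" using card_Un_le[of F1 F2] by linarith
    ultimately show ?thesis using F(1,2) by (intro exI[of _ "F1 \<union> F2"]) auto
  qed
qed

lemma sum_Pow_binomial_weights:
  fixes p :: real
  assumes "finite B"
  shows "(\<Sum>D\<in>Pow B. p ^ card D * (1 - p) ^ card (B - D)) = 1"
proof -
  have "(\<Prod>x\<in>B. p + (1 - p)) = (\<Sum>D\<in>Pow B. (\<Prod>x\<in>D. p) * (\<Prod>x\<in>B - D. 1 - p))"
    using assms by (rule prod_add)
  then show ?thesis by simp
qed

lemma sum_supersets_weight:
  fixes p :: real
  assumes fin: "finite A" and JA: "J \<subseteq> A"
  shows "(\<Sum>E\<in>Pow A. if J \<subseteq> E then p ^ card E * (1 - p) ^ (card A - card E) else 0) = p ^ card J"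
proof -
  let ?B = "A - J"
  let ?w = "\<lambda>E. p ^ card E * (1 - p) ^ (card A - card E)"
  have finJ: "finite J" using finite_subset[OF JA fin] .
  have finB: "finite ?B" using fin by simp
  have "(\<Sum>E\<in>Pow A. if J \<subseteq> E then ?w E else 0) = (\<Sum>E\<in>{E\<in>Pow A. J \<subseteq> E}. ?w E)"
    using sum.inter_filter[of "Pow A" ?w "\<lambda>E. J \<subseteq> E"] fin by simp
  also have "{E\<in>Pow A. J \<subseteq> E} = (\<lambda>D. J \<union> D) ` Pow ?B"
  proof
    show "{E\<in>Pow A. J \<subseteq> E} \<subseteq> (\<lambda>D. J \<union> D) ` Pow ?B"
    proof
      fix E assume "E \<in> {E\<in>Pow A. J \<subseteq> E}"
      then have "E = J \<union> (E - J)" "E - J \<in> Pow ?B" by auto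
      then show "E \<in> (\<lambda>D. J \<union> D) ` Pow ?B" by blast
    qed
    show "(\<lambda>D. J \<union> D) ` Pow ?B \<subseteq> {E\<in>Pow A. J \<subseteq> E}" using JA by blast
  qed
  also have "(\<Sum>E\<in>(\<lambda>D. J \<union> D) ` Pow ?B. ?w E) = (\<Sum>D\<in>Pow ?B. ?w (J \<union> D))"
  proof (rule sum.reindex[unfolded comp_def])
    show "inj_on (\<lambda>D. J \<union> D) (Pow ?B)" by (auto simp: inj_on_def)
  qed
  also have "\<dots> = (\<Sum>D\<in>Pow ?B. p ^ card J * (p ^ card D * (1 - p) ^ card (?B - D)))"
  proof (rule sum.cong[OF refl])
    fix D assume D: "D \<in> Pow ?B"
    have finD: "finite D" using D finite_subset[OF _ finB] by blast
    have c1: "card (J \<union> D) = card J + card D" using D finJ finD by (subst card_Un_disjoint) auto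
    have cA: "card A = card J + card ?B" using card_Diff_subset[OF finJ JA] card_mono[OF fin JA] by simp
    have c2: "card (?B - D) = card ?B - card D" using D finD by (simp add: card_Diff_subset)
    show "?w (J \<union> D) = p ^ card J * (p ^ card D * (1 - p) ^ card (?B - D))"
      using c1 cA c2 by (simp add: power_add)
  qed
  also have "\<dots> = p ^ card J"
    using sum_Pow_binomial_weights[OF finB, of p] by (simp flip: sum_distrib_left)
  finally show ?thesis .
qed

lemma gnp_weight_nonneg: "0 \<le> (p::real) \<Longrightarrow> p \<le> 1 \<Longrightarrow> 0 \<le> p ^ a * (1 - p) ^ b"
  by (intro mult_nonneg_nonneg zero_le_power) auto

lemma gnp_prob_nonneg: "0 \<le> (p::real) \<Longrightarrow> p \<le> 1 \<Longrightarrow> 0 \<le> gnp_prob n p P"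
  unfolding gnp_prob_def by (intro sum_nonneg) (simp add: gnp_weight_nonneg)

lemma gnp_prob_le_sum_subgraphs:
  fixes p :: real
  assumes p: "0 \<le> p" "p \<le> 1" and finJ: "finite \<J>" and JA: "\<J> \<subseteq> Pow (all_edges n)"
    and cov: "\<And>E. E \<subseteq> all_edges n \<Longrightarrow> P E \<Longrightarrow> \<exists>J\<in>\<J>. J \<subseteq> E"
  shows "gnp_prob n p P \<le> (\<Sum>J\<in>\<J>. p ^ card J)"
proof -
  let ?A = "all_edges n"
  let ?w = "\<lambda>E. p ^ card E * (1 - p) ^ (card ?A - card E)"
  have fin: "finite ?A" by (rule finite_all_edges)
  have "gnp_prob n p P \<le> (\<Sum>E\<in>Pow ?A. \<Sum>J\<in>\<J>. if J \<subseteq> E then ?w E else 0)"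
    unfolding gnp_prob_def
  proof (rule sum_mono)
    fix E assume E: "E \<in> Pow ?A"
    show "(if P E then ?w E else 0) \<le> (\<Sum>J\<in>\<J>. if J \<subseteq> E then ?w E else 0)"
    proof (cases "P E")
      case True
      then obtain J where J: "J \<in> \<J>" "J \<subseteq> E" using cov E by blast
      have "?w E = (if J \<subseteq> E then ?w E else 0)" using J by simp
      also have "\<dots> \<le> (\<Sum>J\<in>\<J>. if J \<subseteq> E then ?w E else 0)"
        by (rule member_le_sum[OF J(1) _ finJ]) (simp add: gnp_weight_nonneg p)
      finally show ?thesis using True by simp
    next
      case False
      then show ?thesis using p by (simp add: sum_nonneg gnp_weight_nonneg)
    qed
  qed
  also have "\<dots> = (\<Sum>J\<in>\<J>. \<Sum>E\<in>Pow ?A. if J \<subseteq> E then ?w E else 0)"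
    by (rule sum.swap)
  also have "\<dots> = (\<Sum>J\<in>\<J>. p ^ card J)"
  proof (rule sum.cong[OF refl])
    fix J assume "J \<in> \<J>"
    then have "J \<subseteq> ?A" using JA by blast
    then show "(\<Sum>E\<in>Pow ?A. if J \<subseteq> E then ?w E else 0) = p ^ card J"
      by (rule sum_supersets_weight[OF fin])
  qed
  finally show ?thesis .
qed

lemma card_gverts_le:
  assumes "J \<subseteq> all_edges n"
  shows "card (gverts J) \<le> 2 * card J"
proof -
  have "card (gverts J) \<le> (\<Sum>e\<in>J. card e)"
    unfolding gverts_def by (rule card_Union_le_sum_card)
  also have "\<dots> = (\<Sum>e\<in>J. 2)"
    using assms card_all_edges_member by (intro sum.cong) auto
  finally show ?thesis by simp
qed

text \<open>A graph on \<open>{..<n}\<close> with \<open>v\<close> vertices is determined by its vertex set (at most \<open>n ^ v\<close>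
  choices) and a set of pairs inside it (at most \<open>2 ^ 2 ^ v\<close> choices).\<close>
lemma card_edge_sets_with_card_gverts:
  assumes "\<J> \<subseteq> Pow (all_edges n)"
  shows "card {J\<in>\<J>. card (gverts J) = v} \<le> n ^ v * 2 ^ 2 ^ v"
proof -
  define \<V> where "\<V> = {V. V \<subseteq> {..<n} \<and> card V = v}"
  have fin\<V>: "finite \<V>" and card\<V>: "card \<V> = n choose v"
    unfolding \<V>_def using n_subsets[of "{..<n}" v] by simp_all
  have "card \<V> \<le> n ^ v"
    using card\<V> binomial_le_pow[of v n] binomial_eq_0[of n v] by (cases "v \<le> n") auto
  let ?\<Sigma> = "SIGMA V:\<V>. Pow (Pow V)"
  have card_Pow_Pow: "card (Pow (Pow V)) = 2 ^ 2 ^ v" if "V \<in> \<V>" for V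
    using that finite_subset[of V "{..<n}"] unfolding \<V>_def by (simp add: card_Pow)
  have "card ?\<Sigma> = (\<Sum>V\<in>\<V>. card (Pow (Pow V)))"
    using fin\<V> by (intro card_SigmaI) (auto simp: \<V>_def finite_subset)
  also have "\<dots> = card \<V> * 2 ^ 2 ^ v"
    using card_Pow_Pow by simp
  finally have card_\<Sigma>: "card ?\<Sigma> = card \<V> * 2 ^ 2 ^ v" .
  have "finite ?\<Sigma>"
    using fin\<V> by (auto simp: \<V>_def finite_subset)
  moreover have "inj_on (\<lambda>J. (gverts J, J)) {J\<in>\<J>. card (gverts J) = v}"
    by (auto simp: inj_on_def)
  moreover have "(\<lambda>J. (gverts J, J)) ` {J\<in>\<J>. card (gverts J) = v} \<subseteq> ?\<Sigma>"
    using assms gverts_subset_lessThan unfolding \<V>_def gverts_def by blast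
  ultimately have "card {J\<in>\<J>. card (gverts J) = v} \<le> card ?\<Sigma>"
    by (intro card_inj_on_le)
  also have "\<dots> \<le> n ^ v * 2 ^ 2 ^ v"
    using card_\<Sigma> \<open>card \<V> \<le> n ^ v\<close> by simp
  finally show ?thesis .
qed

lemma sum_subgraph_weights_le:
  fixes c \<delta> :: real
  assumes n: "1 \<le> n" and \<J>: "\<J> \<subseteq> Pow (all_edges n)"
    and small: "\<And>J. J \<in> \<J> \<Longrightarrow> card J \<le> K"
    and sparse: "\<And>J. J \<in> \<J> \<Longrightarrow> real (card (gverts J)) - c * real (card J) \<le> -\<delta>"
  shows "(\<Sum>J\<in>\<J>. (real n powr -c) ^ card J) \<le> (\<Sum>v\<le>2*K. 2 ^ 2 ^ v) * real n powr -\<delta>"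
proof -
  let ?g = "\<lambda>J. card (gverts J)"
  have fin: "finite \<J>"
    using \<J> by (rule finite_subset) (simp add: finite_all_edges)
  have weight: "(real n powr -c) ^ card J \<le> real n powr (-\<delta> - real (?g J))" if "J \<in> \<J>" for J
  proof -
    have "(real n powr -c) ^ card J = real n powr (real (card J) * -c)"
      using n by (simp add: powr_power)
    also have "\<dots> \<le> real n powr (-\<delta> - real (?g J))"
      using sparse[OF that] n by (intro powr_mono) (auto simp: algebra_simps)
    finally show ?thesis .
  qed
  have layer: "(\<Sum>J\<in>{J\<in>\<J>. ?g J = v}. real n powr (-\<delta> - real (?g J))) \<le> 2 ^ 2 ^ v * real n powr -\<delta>"
    for v
  proof -
    have "(\<Sum>J\<in>{J\<in>\<J>. ?g J = v}. real n powr (-\<delta> - real (?g J)))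
        = real (card {J\<in>\<J>. ?g J = v}) * real n powr (-\<delta> - real v)"
      by simp
    also have "\<dots> \<le> real (n ^ v * 2 ^ 2 ^ v) * real n powr (-\<delta> - real v)"
      using card_edge_sets_with_card_gverts[OF \<J>, of v] by (intro mult_right_mono of_nat_mono) auto
    also have "\<dots> = 2 ^ 2 ^ v * (real n powr real v * real n powr (-\<delta> - real v))"
      using n by (simp add: powr_realpow)
    also have "\<dots> = 2 ^ 2 ^ v * real n powr -\<delta>"
      by (simp flip: powr_add)
    finally show ?thesis .
  qed
  have "?g J \<le> 2 * K" if "J \<in> \<J>" for J
    using card_gverts_le[of J n] small[OF that] \<J> that by fastforce
  then have range: "?g ` \<J> \<subseteq> {..2*K}" by blast
  have "(\<Sum>J\<in>\<J>. (real n powr -c) ^ card J) \<le> (\<Sum>J\<in>\<J>. real n powr (-\<delta> - real (?g J)))"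
    by (rule sum_mono) (rule weight)
  also have "\<dots> = (\<Sum>v\<le>2*K. \<Sum>J\<in>{J\<in>\<J>. ?g J = v}. real n powr (-\<delta> - real (?g J)))"
    using fin range by (intro sum.group[symmetric]) auto
  also have "\<dots> \<le> (\<Sum>v\<le>2*K. 2 ^ 2 ^ v * real n powr -\<delta>)"
    by (intro sum_mono layer)
  also have "\<dots> = (\<Sum>v\<le>2*K. 2 ^ 2 ^ v) * real n powr -\<delta>"
    by (simp add: sum_distrib_right)
  finally show ?thesis .
qed

lemma powr_neg_bounds:
  fixes c :: real
  assumes "1 \<le> n" "0 \<le> c"
  shows "0 \<le> real n powr -c" "real n powr -c \<le> 1"
  using assms powr_mono[of "-c" 0 "real n"] by auto

lemma gnp_prob_le_first_moment:
  fixes c \<delta> :: real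
  assumes n: "1 \<le> n" "0 \<le> c" and \<J>: "\<J> \<subseteq> Pow (all_edges n)"
    and small: "\<And>J. J \<in> \<J> \<Longrightarrow> card J \<le> K"
    and sparse: "\<And>J. J \<in> \<J> \<Longrightarrow> real (card (gverts J)) - c * real (card J) \<le> -\<delta>"
    and cover: "\<And>E. E \<subseteq> all_edges n \<Longrightarrow> P E \<Longrightarrow> \<exists>J\<in>\<J>. J \<subseteq> E"
  shows "gnp_prob n (real n powr -c) P \<le> (\<Sum>v\<le>2*K. 2 ^ 2 ^ v) * real n powr -\<delta>"
proof -
  have "finite \<J>"
    using \<J> by (rule finite_subset) (simp add: finite_all_edges)
  then have "gnp_prob n (real n powr -c) P \<le> (\<Sum>J\<in>\<J>. (real n powr -c) ^ card J)"
    using powr_neg_bounds[OF n] \<J> cover by (intro gnp_prob_le_sum_subgraphs)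
  also have "\<dots> \<le> (\<Sum>v\<le>2*K. 2 ^ 2 ^ v) * real n powr -\<delta>"
    using n(1) \<J> small sparse by (rule sum_subgraph_weights_le)
  finally show ?thesis .
qed

lemma sparse_if_phi_large:
  fixes \<epsilon> :: real
  assumes \<epsilon>: "0 < \<epsilon>" "\<epsilon> < 1" "3 \<le> \<epsilon> * real M" and J: "0 < card J"
    and dense: "(M \<le> card J \<and> 0 \<le> phi J) \<or> 8 \<le> phi J"
  shows "real (card (gverts J)) - (2/5 + \<epsilon>) * real (card J) \<le> -\<epsilon>"
proof -
  have phi: "5 * real (card (gverts J)) = 8 + 2 * real (card J) - real_of_int (phi J)"
    unfolding phi_def by simp
  have split: "(2/5 + \<epsilon>) * real (card J) = 2/5 * real (card J) + \<epsilon> * real (card J)"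
    by (simp add: algebra_simps)
  from dense show ?thesis
  proof
    assume large: "M \<le> card J \<and> 0 \<le> phi J"
    then have "\<epsilon> * real M \<le> \<epsilon> * real (card J)"
      using \<epsilon>(1) by (intro mult_left_mono) auto
    moreover have "0 \<le> real_of_int (phi J)" using large by simp
    ultimately show ?thesis
      using phi split \<epsilon> by linarith
  next
    assume "8 \<le> phi J"
    then have "8 \<le> real_of_int (phi J)" by simp
    moreover have "\<epsilon> * 1 \<le> \<epsilon> * real (card J)"
      using J \<epsilon>(1) by (intro mult_left_mono) auto
    ultimately show ?thesis
      using phi split by linarith
  qed
qed

lemma gnp_prob_bad_pair_le:
  fixes \<epsilon> :: real
  assumes \<epsilon>: "0 < \<epsilon>" "\<epsilon> < 1"
  shows "\<exists>C. \<forall>n\<ge>1. gnp_prob n (real n powr -(2/5 + \<epsilon>)) bad_pair \<le> C * real n powr -\<epsilon>"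
proof (intro exI allI impI)
  fix n :: nat
  assume n: "1 \<le> n"
  define M where "M = nat \<lceil>3 / \<epsilon>\<rceil> + 7"
  have "3 / \<epsilon> \<le> real M"
    unfolding M_def by linarith
  then have M: "7 \<le> M" "3 \<le> \<epsilon> * real M"
    using \<epsilon> by (auto simp: M_def field_simps)
  let ?\<J> = "{J. J \<subseteq> all_edges n \<and> card J \<le> 2 * M + 5
               \<and> real (card (gverts J)) - (2/5 + \<epsilon>) * real (card J) \<le> -\<epsilon>}"
  show "gnp_prob n (real n powr -(2/5 + \<epsilon>)) bad_pair
      \<le> (\<Sum>v\<le>2*(2*M+5). 2 ^ 2 ^ v) * real n powr -\<epsilon>"
  proof (rule gnp_prob_le_first_moment[where \<J> = ?\<J>])
    fix E assume E: "E \<subseteq> all_edges n" "bad_pair E"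
    obtain J where J: "J \<subseteq> E" "0 < card J" "card J \<le> 2 * M + 5"
        "(M \<le> card J \<and> 0 \<le> phi J) \<or> 8 \<le> phi J"
      using bad_pair_dense_subgraph[OF E M(1)] by blast
    then have "J \<in> ?\<J>"
      using sparse_if_phi_large[OF \<epsilon> M(2)] E(1) by auto
    then show "\<exists>J\<in>?\<J>. J \<subseteq> E"
      using J(1) by blast
  qed (use n \<epsilon> in auto)
qed

theorem claim7p6:
  shows "\<exists>\<epsilon>0>0. \<forall>\<epsilon>::real. 0 < \<epsilon> \<and> \<epsilon> < \<epsilon>0 \<longrightarrow>
     (\<lambda>n. gnp_prob n (real n powr (-(2/5 + \<epsilon>))) bad_pair) \<longlonglongrightarrow> 0"
proof (intro exI[of _ 1] conjI allI impI)
  fix \<epsilon> :: real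
  assume \<epsilon>: "0 < \<epsilon> \<and> \<epsilon> < 1"
  then obtain C where C: "\<forall>n\<ge>1. gnp_prob n (real n powr -(2/5 + \<epsilon>)) bad_pair \<le> C * real n powr -\<epsilon>"
    using gnp_prob_bad_pair_le by blast
  have nonneg: "0 \<le> gnp_prob n (real n powr -(2/5 + \<epsilon>)) bad_pair" if "1 \<le> n" for n
    using powr_neg_bounds[OF that, of "2/5 + \<epsilon>"] \<epsilon> by (intro gnp_prob_nonneg) auto
  have lim: "(\<lambda>n. C * real n powr -\<epsilon>) \<longlonglongrightarrow> 0"
    by (rule tendsto_mult_right_zero, rule tendsto_neg_powr)
      (use \<epsilon> filterlim_real_sequentially in auto)
  show "(\<lambda>n. gnp_prob n (real n powr (-(2/5 + \<epsilon>))) bad_pair) \<longlonglongrightarrow> 0"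
  proof (rule tendsto_sandwich[OF _ _ tendsto_const lim])
    show "\<forall>\<^sub>F n in sequentially. 0 \<le> gnp_prob n (real n powr -(2/5 + \<epsilon>)) bad_pair"
      using eventually_ge_at_top[of 1] by eventually_elim (rule nonneg)
    show "\<forall>\<^sub>F n in sequentially. gnp_prob n (real n powr -(2/5 + \<epsilon>)) bad_pair \<le> C * real n powr -\<epsilon>"
      using eventually_ge_at_top[of 1] by eventually_elim (use C in blast)
  qed
qed simp

end
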